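(* Let $S$ be a numerical semigroup with minimal generators $e<a_1<\dots<a_t$. Let $0\le i<e$ and write ${\rm adj}(S_i)=\{u_0<u_1<u_2<\cdots\}$. Let $j>0$, $0\le k<j$ and $\mathbf x\in\mathcal R(u_j)$. Then $|\mathbf x|<\min{\rm ord}(u_k;B^{\mathcal D})-\frac{u_j-u_k}{e}$.
   Context: A numerical semigroup is a submonoid of $(\mathbb N,+)$ with finite complement. ${\rm ord}(n;S)$ is the maximum of $\sum c_i$ over $(c_0,\dots,c_t)\in\mathbb N^{t+1}$ with $c_0e+\sum c_ia_i=n$. Let $d_i=a_i-e$, $B=\langle e,d_1,\dots,d_t\rangle$, $\mathcal D=(e,d_1,\dots,d_t)$. A $B^{\mathcal D}$-factorization of $b$ is $\mathbf x=(x_0,\dots,x_t)\in\mathbb N^{t+1}$ with $x_0e+\sum x_id_i=b$, of length $|\mathbf x|=\sum x_i$. $\min{\rm ord}(b;B^{\mathcal D})$ is the minimal such length, and $\mathcal P(b)$ is the set of all of them. $S_i=\{s\in S:s\equiv i\pmod e\}$ and ${\rm adj}(S_i)=\{s-{\rm ord}(s;S)e:s\in S_i\}$. Define $\mathcal R(u_0)=\mathcal P(u_0)$ and, for $j>0$, $\mathcal R(u_j)=\{\mathbf x\in\mathcal P(u_j):|\mathbf x|<\min{\rm ord}(u_{j-1};B^{\mathcal D})-\frac{u_j-u_{j-1}}{e}\}$. *)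

theory Defs
  imports Complex_Main
begin

definition numerical_semigroup :: "nat set \<Rightarrow> bool" where
  "numerical_semigroup S \<longleftrightarrow> 0 \<in> S \<and> (\<forall>x\<in>S. \<forall>y\<in>S. x + y \<in> S) \<and> finite (UNIV - S)"

definition minimal_generators :: "nat set \<Rightarrow> nat set" where
  "minimal_generators S = {s \<in> S. s \<noteq> 0 \<and>
      \<not> (\<exists>x\<in>S. \<exists>y\<in>S. x \<noteq> 0 \<and> y \<noteq> 0 \<and> s = x + y)}"

text \<open>Vectors (c_0,...,c_t) are functions nat => nat vanishing above t.\<close>
definition vec_len :: "nat \<Rightarrow> (nat \<Rightarrow> nat) \<Rightarrow> nat" where
  "vec_len t c = (\<Sum>i\<le>t. c i)"

definition ordS :: "nat \<Rightarrow> (nat \<Rightarrow> nat) \<Rightarrow> nat \<Rightarrow> nat \<Rightarrow> nat" where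
  "ordS e a t n = Max {vec_len t c | c. (\<forall>i>t. c i = 0) \<and>
       c 0 * e + (\<Sum>i\<in>{1..t}. c i * a i) = n}"

definition dgen :: "nat \<Rightarrow> (nat \<Rightarrow> nat) \<Rightarrow> nat \<Rightarrow> nat" where
  "dgen e a i = a i - e"

definition BD_facts :: "nat \<Rightarrow> (nat \<Rightarrow> nat) \<Rightarrow> nat \<Rightarrow> nat \<Rightarrow> (nat \<Rightarrow> nat) set" where
  "BD_facts e a t b = {x. (\<forall>i>t. x i = 0) \<and>
       x 0 * e + (\<Sum>i\<in>{1..t}. x i * dgen e a i) = b}"

definition min_ord_BD :: "nat \<Rightarrow> (nat \<Rightarrow> nat) \<Rightarrow> nat \<Rightarrow> nat \<Rightarrow> nat" where
  "min_ord_BD e a t b = Min (vec_len t ` BD_facts e a t b)"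

definition adjS :: "nat set \<Rightarrow> nat \<Rightarrow> (nat \<Rightarrow> nat) \<Rightarrow> nat \<Rightarrow> nat \<Rightarrow> nat set" where
  "adjS S e a t i = {s - ordS e a t s * e | s. s \<in> S \<and> s mod e = i}"

definition pred_in :: "nat set \<Rightarrow> nat \<Rightarrow> nat" where
  "pred_in A u = Max {v \<in> A. v < u}"

definition R_set :: "nat set \<Rightarrow> nat \<Rightarrow> (nat \<Rightarrow> nat) \<Rightarrow> nat \<Rightarrow> nat \<Rightarrow> nat \<Rightarrow> (nat \<Rightarrow> nat) set" where
  "R_set S e a t i u =
     (let A = adjS S e a t i in
      if u = Min A then BD_facts e a t u
      else {x \<in> BD_facts e a t u.
              real (vec_len t x) < real (min_ord_BD e a t (pred_in A u))
                 - (real u - real (pred_in A u)) / real e})"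

end

theory Submission
  imports Defs
begin

text \<open>The key fact is that \<open>u \<mapsto> u + e \<cdot> min ord(u; B\<^sup>\<D>)\<close> is non-increasing on
  \<open>adj(S\<^sub>i)\<close>. Write \<open>u = s - ord(s;S) e\<close> with \<open>s \<in> S\<^sub>i\<close>; deleting the \<open>e\<close>-part of a maximal
  factorization of \<open>s\<close> gives a \<open>B\<^sup>\<D>\<close>-factorization of \<open>u\<close> of length at most \<open>ord(s;S)\<close>.
  Conversely a minimal \<open>B\<^sup>\<D>\<close>-factorization \<open>y\<close> of \<open>v\<close> lifts to \<open>s' = v + |y| e \<in> S\<^sub>i\<close> with
  \<open>ord(s';S) \<ge> |y|\<close>; since \<open>s \<mapsto> s - ord(s;S) e\<close> is non-increasing along each residue class,
  \<open>v < u\<close> forces \<open>s \<le> s'\<close>, which is the claim. The bound defining \<open>\<R>(u\<^sub>j)\<close>, stated relative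
  to the predecessor of \<open>u\<^sub>j\<close>, therefore transfers to every smaller \<open>u\<^sub>k\<close>.\<close>

definition factorizations :: "nat \<Rightarrow> (nat \<Rightarrow> nat) \<Rightarrow> nat \<Rightarrow> nat \<Rightarrow> (nat \<Rightarrow> nat) set" where
  "factorizations e g t n = {x. (\<forall>i>t. x i = 0) \<and> x 0 * e + (\<Sum>i\<in>{1..t}. x i * g i) = n}"

lemma BD_facts_eq_factorizations: "BD_facts e a t = factorizations e (dgen e a) t"
  unfolding BD_facts_def factorizations_def ..

lemma ordS_eq_Max: "ordS e a t n = Max (vec_len t ` factorizations e a t n)"
  unfolding ordS_def factorizations_def by (simp add: setcompr_eq_image)

lemma vec_len_eq: "vec_len t c = c 0 + (\<Sum>i\<in>{1..t}. c i)"
  unfolding vec_len_def by (simp add: atMost_atLeast0 sum.atLeast_Suc_atMost)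

lemma sum_atLeast1_fun_upd_0:
  "(\<Sum>i\<in>{1..t::nat}. f ((x(0 := k)) i) i) = (\<Sum>i\<in>{1..t}. f (x i) i)"
  by (rule sum.cong) auto

lemma vec_len_fun_upd_0: "vec_len t (x(0 := k)) = k + (\<Sum>i\<in>{1..t}. x i)"
  using sum_atLeast1_fun_upd_0[where f = "\<lambda>y i. y"] by (simp add: vec_len_eq)

lemma vec_len_le_factorizations:
  assumes "0 < e" "\<forall>i\<in>{1..t}. 0 < g i" "x \<in> factorizations e g t n"
  shows "vec_len t x \<le> n"
proof -
  have "(\<Sum>i\<in>{1..t}. x i) \<le> (\<Sum>i\<in>{1..t}. x i * g i)"
    using assms(2) by (intro sum_mono) (simp add: Suc_le_eq)
  then have "vec_len t x \<le> x 0 * e + (\<Sum>i\<in>{1..t}. x i * g i)"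
    unfolding vec_len_eq using assms(1) by (intro add_mono) simp_all
  then show ?thesis using assms(3) unfolding factorizations_def by simp
qed

lemma finite_vec_len_factorizations:
  assumes "0 < e" "\<forall>i\<in>{1..t}. 0 < g i"
  shows "finite (vec_len t ` factorizations e g t n)"
proof (rule finite_subset)
  show "vec_len t ` factorizations e g t n \<subseteq> {..n}"
    using vec_len_le_factorizations[OF assms] by blast
qed simp

lemma unit_vector_factorization:
  assumes "k \<in> {1..t}"
  shows "(\<lambda>i. if i = k then 1 else 0) \<in> factorizations e g t (g k)"
  using assms by (simp add: factorizations_def if_distrib[of "\<lambda>y. y * _"] cong: if_cong)

lemma factorizations_add:
  assumes "c \<in> factorizations e g t m" "d \<in> factorizations e g t n"
  shows "(\<lambda>i. c i + d i) \<in> factorizations e g t (m + n)"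
  using assms by (simp add: factorizations_def algebra_simps sum.distrib)

locale generators =
  fixes e :: nat and a :: "nat \<Rightarrow> nat" and t :: nat
  assumes e_pos: "0 < e" and e_less_gen: "\<forall>j\<in>{1..t}. e < a j"
begin

lemma finite_vec_len_S_factorizations: "finite (vec_len t ` factorizations e a t n)"
  using e_pos e_less_gen by (intro finite_vec_len_factorizations) auto

lemma finite_vec_len_BD_facts: "finite (vec_len t ` BD_facts e a t n)"
  unfolding BD_facts_eq_factorizations using e_pos e_less_gen
  by (intro finite_vec_len_factorizations) (auto simp: dgen_def)

lemma ordS_ge: "c \<in> factorizations e a t s \<Longrightarrow> vec_len t c \<le> ordS e a t s"
  unfolding ordS_eq_Max using finite_vec_len_S_factorizations by simp

lemma ordS_attained:
  assumes "factorizations e a t s \<noteq> {}"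
  obtains c where "c \<in> factorizations e a t s" "vec_len t c = ordS e a t s"
proof -
  have "ordS e a t s \<in> vec_len t ` factorizations e a t s"
    unfolding ordS_eq_Max using assms by (intro Max_in finite_vec_len_S_factorizations) simp
  then show ?thesis using that by (metis imageE)
qed

lemma min_ord_BD_le: "x \<in> BD_facts e a t b \<Longrightarrow> min_ord_BD e a t b \<le> vec_len t x"
  unfolding min_ord_BD_def using finite_vec_len_BD_facts by simp

lemma min_ord_BD_attained:
  assumes "BD_facts e a t b \<noteq> {}"
  obtains y where "y \<in> BD_facts e a t b" "vec_len t y = min_ord_BD e a t b"
proof -
  have "min_ord_BD e a t b \<in> vec_len t ` BD_facts e a t b"
    unfolding min_ord_BD_def using assms by (intro Min_in finite_vec_len_BD_facts) simp
  then show ?thesis using that by (metis imageE)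
qed

lemma sum_gen_eq_sum_dgen:
  "(\<Sum>i\<in>{1..t}. c i * a i) = (\<Sum>i\<in>{1..t}. c i * dgen e a i) + (\<Sum>i\<in>{1..t}. c i) * e"
proof -
  have "(\<Sum>i\<in>{1..t}. c i * a i) = (\<Sum>i\<in>{1..t}. c i * dgen e a i + c i * e)"
  proof (rule sum.cong)
    fix i assume "i \<in> {1..t}"
    then have "e < a i" using e_less_gen by blast
    then have "a i = dgen e a i + e" by (simp add: dgen_def)
    then show "c i * a i = c i * dgen e a i + c i * e" by (simp add: algebra_simps)
  qed simp
  then show ?thesis by (simp add: sum.distrib sum_distrib_right)
qed

lemma factorization_split:
  assumes "c \<in> factorizations e a t s"
  shows "s = (\<Sum>i\<in>{1..t}. c i * dgen e a i) + vec_len t c * e"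
  using assms unfolding factorizations_def sum_gen_eq_sum_dgen vec_len_eq
  by (simp add: algebra_simps)

lemma BD_fact_of_factorization:
  assumes "c \<in> factorizations e a t s"
  shows "c(0 := 0) \<in> BD_facts e a t (s - vec_len t c * e)"
  using assms factorization_split[OF assms]
  by (simp add: BD_facts_def factorizations_def sum_atLeast1_fun_upd_0)

text \<open>Each \<open>d\<^sub>i\<close> becomes \<open>a\<^sub>i = d\<^sub>i + e\<close> and each \<open>e\<close> becomes \<open>2e\<close>, using up the extra \<open>|y| e\<close>.\<close>
lemma factorization_of_BD_fact:
  assumes "y \<in> BD_facts e a t v"
  shows "y(0 := 2 * y 0) \<in> factorizations e a t (v + vec_len t y * e)"
proof -
  have "v + vec_len t y * e = 2 * y 0 * e + (\<Sum>i\<in>{1..t}. y i * a i)"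
    using assms unfolding BD_facts_def sum_gen_eq_sum_dgen vec_len_eq by (simp add: algebra_simps)
  then show ?thesis
    using assms by (simp add: BD_facts_def factorizations_def sum_atLeast1_fun_upd_0)
qed

lemma vec_len_le_ordS_lift:
  assumes "y \<in> BD_facts e a t v"
  shows "vec_len t y \<le> ordS e a t (v + vec_len t y * e)"
proof -
  have "vec_len t y \<le> vec_len t (y(0 := 2 * y 0))"
    by (simp add: vec_len_fun_upd_0 vec_len_eq)
  also have "\<dots> \<le> ordS e a t (v + vec_len t y * e)"
    using factorization_of_BD_fact[OF assms] by (rule ordS_ge)
  finally show ?thesis .
qed

lemma ordS_add_mult:
  assumes "factorizations e a t s \<noteq> {}"
  shows "ordS e a t s + r \<le> ordS e a t (s + r * e)"
proof -
  obtain c where c: "c \<in> factorizations e a t s" "vec_len t c = ordS e a t s"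
    using ordS_attained[OF assms] .
  have "c(0 := c 0 + r) \<in> factorizations e a t (s + r * e)"
    using c(1) by (simp add: factorizations_def sum_atLeast1_fun_upd_0 algebra_simps)
  moreover have "vec_len t (c(0 := c 0 + r)) = ordS e a t s + r"
    using c(2) by (simp add: vec_len_fun_upd_0 vec_len_eq)
  ultimately show ?thesis using ordS_ge by metis
qed

lemma ordS_mult_le:
  assumes "factorizations e a t s \<noteq> {}"
  shows "ordS e a t s * e \<le> s"
proof -
  obtain c where "c \<in> factorizations e a t s" "vec_len t c = ordS e a t s"
    using ordS_attained[OF assms] .
  then show ?thesis using factorization_split by (metis le_add2)
qed

lemma BD_fact_of_adjustment:
  assumes "factorizations e a t s \<noteq> {}"
  obtains y where "y \<in> BD_facts e a t (s - ordS e a t s * e)" "vec_len t y \<le> ordS e a t s"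
proof -
  obtain c where c: "c \<in> factorizations e a t s" "vec_len t c = ordS e a t s"
    using ordS_attained[OF assms] .
  have "c(0 := 0) \<in> BD_facts e a t (s - ordS e a t s * e)"
    using BD_fact_of_factorization[OF c(1)] c(2) by simp
  moreover have "vec_len t (c(0 := 0)) \<le> ordS e a t s"
    using c(2) by (simp add: vec_len_fun_upd_0 vec_len_eq)
  ultimately show ?thesis by (rule that)
qed

text \<open>Moving up a residue class by \<open>r e\<close> raises \<open>ord\<close> by at least \<open>r\<close>, so the adjustment
  \<open>s - ord(s;S) e\<close> can only decrease.\<close>
lemma adjustment_antimono:
  assumes "factorizations e a t s' \<noteq> {}" "s' \<le> s" "s mod e = s' mod e"
  shows "s - ordS e a t s * e \<le> s' - ordS e a t s' * e"
proof -
  obtain r where r: "s = s' + r * e"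
    using assms(2,3) by (metis le_add_diff_inverse mod_eq_dvd_iff_nat dvd_def mult.commute)
  have "(ordS e a t s' + r) * e \<le> ordS e a t s * e"
    using ordS_add_mult[OF assms(1)] r by simp
  then show ?thesis using r ordS_mult_le[OF assms(1)] by (simp add: algebra_simps)
qed

end

locale minimal_generating_system =
  fixes S :: "nat set" and e :: nat and a :: "nat \<Rightarrow> nat" and t :: nat
  assumes min_gens: "minimal_generators S = insert e (a ` {1..t})"
    and e_less_gen: "\<forall>j\<in>{1..t}. e < a j"

sublocale minimal_generating_system \<subseteq> generators
proof
  have "e \<in> minimal_generators S" using min_gens by simp
  then show "0 < e" by (simp add: minimal_generators_def)
qed (fact e_less_gen)

context minimal_generating_system
begin

lemma factorizations_nonempty: "s \<in> S \<Longrightarrow> factorizations e a t s \<noteq> {}"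
proof (induction s rule: less_induct)
  case (less s)
  show ?case
  proof (cases "s \<in> minimal_generators S")
    case True
    then have "s = e \<or> (\<exists>k\<in>{1..t}. s = a k)" using min_gens by auto
    then show ?thesis
    proof
      assume "s = e"
      then have "(\<lambda>i. if i = 0 then 1 else 0) \<in> factorizations e a t s"
        by (simp add: factorizations_def)
      then show ?thesis by blast
    next
      assume "\<exists>k\<in>{1..t}. s = a k"
      then show ?thesis using unit_vector_factorization by blast
    qed
  next
    case False
    show ?thesis
    proof (cases "s = 0")
      case True
      then have "(\<lambda>_. 0) \<in> factorizations e a t s" by (simp add: factorizations_def)
      then show ?thesis by blast
    next
      case s_pos: False
      then obtain x y where "x \<in> S" "y \<in> S" "x \<noteq> 0" "y \<noteq> 0" "s = x + y"
        using False less.prems unfolding minimal_generators_def by auto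
      then have "x < s" "y < s" "x \<in> S" "y \<in> S" "s = x + y" by simp_all
      then show ?thesis using less.IH factorizations_add by blast
    qed
  qed
qed

lemma adjS_elem:
  assumes "u \<in> adjS S e a t i"
  obtains s where "s \<in> S" "s mod e = i" "s = u + ordS e a t s * e"
    "BD_facts e a t u \<noteq> {}" "min_ord_BD e a t u \<le> ordS e a t s"
proof -
  obtain s where s: "s \<in> S" "s mod e = i" "u = s - ordS e a t s * e"
    using assms unfolding adjS_def by blast
  have fs: "factorizations e a t s \<noteq> {}" using factorizations_nonempty s(1) .
  obtain y where "y \<in> BD_facts e a t u" "vec_len t y \<le> ordS e a t s"
    using BD_fact_of_adjustment[OF fs] s(3) by blast
  then have "BD_facts e a t u \<noteq> {}" "min_ord_BD e a t u \<le> ordS e a t s"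
    using min_ord_BD_le order_trans by blast+
  moreover have "s = u + ordS e a t s * e" using s(3) ordS_mult_le[OF fs] by simp
  ultimately show ?thesis using that s(1,2) by blast
qed

lemma adjS_le:
  assumes "s\<^sub>0 \<in> S" "s\<^sub>0 mod e = i" "u \<in> adjS S e a t i"
  shows "u \<le> s\<^sub>0"
proof -
  obtain s where s: "s \<in> S" "s mod e = i" "s = u + ordS e a t s * e"
    using adjS_elem[OF assms(3)] .
  show ?thesis
  proof (cases "s \<le> s\<^sub>0")
    case False
    then have "s - ordS e a t s * e \<le> s\<^sub>0 - ordS e a t s\<^sub>0 * e"
      using assms(1,2) s(2) factorizations_nonempty by (intro adjustment_antimono) auto
    then show ?thesis using s(3) by linarith
  qed (use s(3) in linarith)
qed

lemma finite_adjS: "finite (adjS S e a t i)"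
proof (cases "\<exists>s\<in>S. s mod e = i")
  case True
  then obtain s\<^sub>0 where "s\<^sub>0 \<in> S" "s\<^sub>0 mod e = i" by blast
  then have "adjS S e a t i \<subseteq> {..s\<^sub>0}" using adjS_le by blast
  then show ?thesis by (rule finite_subset) simp
next
  case False
  then have "adjS S e a t i = {}" unfolding adjS_def by auto
  then show ?thesis by simp
qed

lemma adjS_min_ord_antimono:
  assumes "u \<in> adjS S e a t i" "v \<in> adjS S e a t i" "v \<le> u"
  shows "u + min_ord_BD e a t u * e \<le> v + min_ord_BD e a t v * e"
proof -
  obtain s where s: "s \<in> S" "s mod e = i" "s = u + ordS e a t s * e"
    "min_ord_BD e a t u \<le> ordS e a t s"
    using adjS_elem[OF assms(1)] .
  obtain s\<^sub>v where s\<^sub>v: "s\<^sub>v mod e = i" "s\<^sub>v = v + ordS e a t s\<^sub>v * e" "BD_facts e a t v \<noteq> {}"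
    using adjS_elem[OF assms(2)] .
  obtain y where y: "y \<in> BD_facts e a t v" "vec_len t y = min_ord_BD e a t v"
    using min_ord_BD_attained[OF s\<^sub>v(3)] .
  define s' where "s' = v + min_ord_BD e a t v * e"
  have fs': "factorizations e a t s' \<noteq> {}"
    using factorization_of_BD_fact[OF y(1)] unfolding s'_def y(2) by (metis empty_iff)
  have ord_s': "min_ord_BD e a t v \<le> ordS e a t s'"
    using vec_len_le_ordS_lift[OF y(1)] unfolding s'_def y(2) .
  have "s' mod e = i"
    using arg_cong[OF s\<^sub>v(2), of "\<lambda>n. n mod e"] s\<^sub>v(1) unfolding s'_def by simp
  show ?thesis
  proof (cases "s \<le> s'")
    case True
    have "u + min_ord_BD e a t u * e \<le> u + ordS e a t s * e"
      using s(4) by simp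
    also have "\<dots> \<le> s'" using s(3) True by simp
    finally show ?thesis unfolding s'_def .
  next
    case False
    then have "s - ordS e a t s * e \<le> s' - ordS e a t s' * e"
      using fs' \<open>s' mod e = i\<close> s(2) by (intro adjustment_antimono) auto
    also have "\<dots> \<le> v"
      using mult_le_mono1[OF ord_s', of e] unfolding s'_def by linarith
    finally have "u \<le> v" using s(3) by linarith
    then show ?thesis using assms(3) by simp
  qed
qed

end

theorem lemma3p8:
  fixes S :: "nat set" and e t i :: nat and a :: "nat \<Rightarrow> nat"
    and uj uk :: nat and x :: "nat \<Rightarrow> nat"
  assumes "numerical_semigroup S"
    and "minimal_generators S = insert e (a ` {1..t})"
    and "\<forall>j\<in>{1..t}. e < a j"
    and "strict_mono_on {1..t} a"
    and "i < e"
    and "uj \<in> adjS S e a t i" and "uk \<in> adjS S e a t i" and "uk < uj"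
    and "x \<in> R_set S e a t i uj"
  shows "real (vec_len t x) < real (min_ord_BD e a t uk) - (real uj - real uk) / real e"
proof -
  interpret minimal_generating_system S e a t using assms(2,3) by unfold_locales
  define A where "A = adjS S e a t i"
  define p where "p = pred_in A uj"
  have uk_below: "uk \<in> {v \<in> A. v < uj}" using assms(7,8) unfolding A_def by simp
  have "p \<in> A" "uk \<le> p"
    using Max_in[of "{v \<in> A. v < uj}"] Max_ge[of "{v \<in> A. v < uj}" uk] uk_below
    unfolding p_def pred_in_def by auto
  have "Min A \<le> uk" using finite_adjS uk_below unfolding A_def by simp
  then have "uj \<noteq> Min A" using assms(8) by simp
  then have x_len: "real (vec_len t x) < real (min_ord_BD e a t p) - (real uj - real p) / real e"
    using assms(9) unfolding R_set_def Let_def A_def[symmetric] p_def by simp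
  have "p + min_ord_BD e a t p * e \<le> uk + min_ord_BD e a t uk * e"
    using adjS_min_ord_antimono \<open>p \<in> A\<close> \<open>uk \<le> p\<close> assms(7) unfolding A_def by blast
  then have "real p + real (min_ord_BD e a t p) * real e \<le> real uk + real (min_ord_BD e a t uk) * real e"
    by (metis of_nat_add of_nat_le_iff of_nat_mult)
  with x_len e_pos show ?thesis by (simp add: field_simps)
qed

end
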